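(* Let $t$ be an indeterminate, let $\mathbf K$ be an infinite subset of $\mathbb C\setminus\{0,1\}$, and let $\mathbb F$ be a subring of $\mathbb C(t)$ with $$\mathbb C[t,t^{-1}]\subseteq \mathbb F\subseteq\{f/g : f,g\in\mathbb C[t],\ g(1)\neq 0,\ g(\lambda)\neq0\ \forall \lambda\in\mathbf K\}.$$ Let $A$ be the $\mathbb F$-algebra generated by $x_1,\dots,x_n$ subject to finitely many relations $f_1,\dots,f_m$, each $f_i=\sum_{\mathbf x}a^i_{\mathbf x}(t)\mathbf x$ an $\mathbb F$-linear combination of monomials $\mathbf x$ in the $x_j$. Assume $t-1$ is a nonzero, nonunit, non-zero-divisor of $A$ and that $A_1:=A/(t-1)A$ is commutative; let $\gamma_1:A\to A_1$ be the canonical map. For $\lambda\in\mathbf K$ let $A_\lambda$ be the $\mathbb C$-algebra generated by $x_1,\dots,x_n$ subject to the relations $f_i|_{t=\lambda}=\sum_{\mathbf x}a^i_{\mathbf x}(\lambda)\mathbf x$, and let $\gamma_\lambda:A\to A_\lambda$ be the $\mathbb C$-algebra homomorphism with $\gamma_\lambda(t)=\lambda$, $\gamma_\lambda(x_j)=x_j$. Let $\widehat A=\prod_{\lambda\in\mathbf K}A_\lambda$ and $\gamma:A\to\widehat A$, $\gamma(a)=(\gamma_\lambda(a))_{\lambda\in\mathbf K}$. Assume there is an $\mathbb F$-basis $\{\xi_i\}_{i\in I}$ of $A$ such that $\{\gamma_1(\xi_i)\}_{i\in I}$ is a $\mathbb C$-basis of $A_1$ and $\{\gamma_\lambda(\xi_i)\}_{i\in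 I}$ is a $\mathbb C$-basis of $A_\lambda$ for every $\lambda\in\mathbf K$. Then $\gamma$ is a monomorphism of $\mathbb C$-algebras.
   Context: All algebras are over $\mathbb C$ and unital. Elements of $\mathbb F$ are regular at $1$ and at every $\lambda\in\mathbf K$, so evaluating coefficients at $t=\lambda$ or $t=1$ is well defined. *)

theory Defs
  imports "HOL-Computational_Algebra.Polynomial" "HOL-Computational_Algebra.Fraction_Field"
begin

definition eval_rf :: "complex \<Rightarrow> complex poly fract \<Rightarrow> complex" where
  "eval_rf z r = (THE v. \<exists>f g. poly g z \<noteq> 0 \<and> r = Fract f g \<and> v = poly f z / poly g z)"

definition const_rf :: "complex \<Rightarrow> complex poly fract" where
  "const_rf c = Fract [:c:] 1"

text \<open>Noncommutative polynomials (free algebra) over a coefficient ring: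
functions from words (lists of generator indices) to coefficients.\<close>

definition ncp_mult :: "('a list \<Rightarrow> 'r::comm_ring_1) \<Rightarrow> ('a list \<Rightarrow> 'r) \<Rightarrow> 'a list \<Rightarrow> 'r" where
  "ncp_mult p q = (\<lambda>w. \<Sum>k\<le>length w. p (take k w) * q (drop k w))"

definition ncp_add :: "('a list \<Rightarrow> 'r::comm_ring_1) \<Rightarrow> ('a list \<Rightarrow> 'r) \<Rightarrow> 'a list \<Rightarrow> 'r" where
  "ncp_add p q = (\<lambda>w. p w + q w)"

definition ncp_diff :: "('a list \<Rightarrow> 'r::comm_ring_1) \<Rightarrow> ('a list \<Rightarrow> 'r) \<Rightarrow> 'a list \<Rightarrow> 'r" where
  "ncp_diff p q = (\<lambda>w. p w - q w)"

definition ncp_const :: "'r::comm_ring_1 \<Rightarrow> 'a list \<Rightarrow> 'r" where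
  "ncp_const c = (\<lambda>w. if w = [] then c else 0)"

definition ncp_var :: "'a \<Rightarrow> 'a list \<Rightarrow> 'r::comm_ring_1" where
  "ncp_var j = (\<lambda>w. if w = [j] then 1 else 0)"

definition ncp_smult :: "'r::comm_ring_1 \<Rightarrow> ('a list \<Rightarrow> 'r) \<Rightarrow> 'a list \<Rightarrow> 'r" where
  "ncp_smult c p = (\<lambda>w. c * p w)"

definition ncp_sum :: "'i set \<Rightarrow> ('i \<Rightarrow> 'a list \<Rightarrow> 'r::comm_ring_1) \<Rightarrow> 'a list \<Rightarrow> 'r" where
  "ncp_sum S f = (\<lambda>w. \<Sum>i\<in>S. f i w)"

definition FreeAlg :: "'r::comm_ring_1 set \<Rightarrow> nat \<Rightarrow> (nat list \<Rightarrow> 'r) set" where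
  "FreeAlg R n = {p. finite {w. p w \<noteq> 0} \<and> (\<forall>w. p w \<in> R) \<and> (\<forall>w. p w \<noteq> 0 \<longrightarrow> set w \<subseteq> {..<n})}"

inductive_set rel_ideal :: "'r::comm_ring_1 set \<Rightarrow> nat \<Rightarrow> (nat list \<Rightarrow> 'r) list \<Rightarrow> (nat list \<Rightarrow> 'r) set"
  for R n fs where
  zero: "(\<lambda>w. 0) \<in> rel_ideal R n fs"
| gen: "a \<in> FreeAlg R n \<Longrightarrow> b \<in> FreeAlg R n \<Longrightarrow> i < length fs \<Longrightarrow>
        ncp_mult (ncp_mult a (fs ! i)) b \<in> rel_ideal R n fs"
| add: "p \<in> rel_ideal R n fs \<Longrightarrow> q \<in> rel_ideal R n fs \<Longrightarrow> ncp_add p q \<in> rel_ideal R n fs"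

text \<open>Specialization t := z of coefficients (the map gamma_z on the level of free algebras).\<close>
definition spec :: "complex \<Rightarrow> (nat list \<Rightarrow> complex poly fract) \<Rightarrow> nat list \<Rightarrow> complex" where
  "spec z p = (\<lambda>w. eval_rf z (p w))"

text \<open>Preimage in the free algebra of the ideal (t-1)A + 0 of A, i.e. the kernel of
the composite F<x> -> A -> A_1 = A/(t-1)A.\<close>
definition J1 :: "complex poly fract set \<Rightarrow> nat \<Rightarrow> (nat list \<Rightarrow> complex poly fract) list
     \<Rightarrow> (nat list \<Rightarrow> complex poly fract) set" where
  "J1 F n fs = {ncp_add a (ncp_mult (ncp_const (Fract [:-1, 1:] 1)) q) | a q.
       a \<in> rel_ideal F n fs \<and> q \<in> FreeAlg F n}"

end

theory Submission
  imports Defs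
begin

(* Expand p in the F-basis: p = sum c_i xi_i modulo the relations, with c_i in F. If every
   specialization of p vanishes, then for each z in K the specialized expansion
   sum c_i(z) gamma_z(xi_i) lies in the ideal of A_z, so c_i(z) = 0 because the gamma_z(xi_i)
   are a basis of A_z. Thus each numerator of c_i has infinitely many roots, c_i = 0,
   and p lies in the ideal of relations of A. *)

definition regular_on :: "complex set \<Rightarrow> complex poly fract \<Rightarrow> bool" where
  "regular_on A r \<longleftrightarrow> (\<exists>f g. r = Fract f g \<and> g \<noteq> 0 \<and> (\<forall>z\<in>A. poly g z \<noteq> 0))"

lemma regular_on_Fract:
  "g \<noteq> 0 \<Longrightarrow> (\<And>z. z \<in> A \<Longrightarrow> poly g z \<noteq> 0) \<Longrightarrow> regular_on A (Fract f g)"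
  unfolding regular_on_def by blast

lemma regular_on_subset: "regular_on A r \<Longrightarrow> B \<subseteq> A \<Longrightarrow> regular_on B r"
  unfolding regular_on_def by blast

lemma regular_on_0: "regular_on A 0"
  unfolding Zero_fract_def by (rule regular_on_Fract) simp_all

lemma regular_on_const_rf: "regular_on A (const_rf c)"
  unfolding const_rf_def by (rule regular_on_Fract) simp_all

lemma regular_on_add:
  assumes "regular_on A a" "regular_on A b"
  shows "regular_on A (a + b)"
proof -
  obtain f g f' g' where "a = Fract f g" "g \<noteq> 0" "\<forall>z\<in>A. poly g z \<noteq> 0"
    and "b = Fract f' g'" "g' \<noteq> 0" "\<forall>z\<in>A. poly g' z \<noteq> 0"
    using assms unfolding regular_on_def by blast
  then show ?thesis
    by (auto intro!: regular_on_Fract)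
qed

lemma regular_on_uminus:
  assumes "regular_on A a"
  shows "regular_on A (- a)"
proof -
  obtain f g where "a = Fract f g" "g \<noteq> 0" "\<forall>z\<in>A. poly g z \<noteq> 0"
    using assms unfolding regular_on_def by blast
  then show ?thesis
    by (auto intro!: regular_on_Fract)
qed

lemma regular_on_mult:
  assumes "regular_on A a" "regular_on A b"
  shows "regular_on A (a * b)"
proof -
  obtain f g f' g' where "a = Fract f g" "g \<noteq> 0" "\<forall>z\<in>A. poly g z \<noteq> 0"
    and "b = Fract f' g'" "g' \<noteq> 0" "\<forall>z\<in>A. poly g' z \<noteq> 0"
    using assms unfolding regular_on_def by blast
  then show ?thesis
    by (auto intro!: regular_on_Fract)
qed

lemma regular_on_sum:
  "finite S \<Longrightarrow> (\<And>i. i \<in> S \<Longrightarrow> regular_on A (f i)) \<Longrightarrow> regular_on A (sum f S)"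
  by (induction S rule: finite_induct) (auto intro: regular_on_0 regular_on_add)

lemma eval_rf_Fract:
  assumes "poly g z \<noteq> 0"
  shows "eval_rf z (Fract f g) = poly f z / poly g z"
  unfolding eval_rf_def
proof (rule the_equality)
  fix v assume "\<exists>f' g'. poly g' z \<noteq> 0 \<and> Fract f g = Fract f' g' \<and> v = poly f' z / poly g' z"
  then obtain f' g' where g': "poly g' z \<noteq> 0" and eq: "Fract f g = Fract f' g'"
    and v: "v = poly f' z / poly g' z" by blast
  have "g \<noteq> 0" "g' \<noteq> 0"
    using assms g' by auto
  then have "f * g' = f' * g"
    using eq eq_fract(1) by blast
  then have "poly f z * poly g' z = poly f' z * poly g z"
    by (metis poly_mult)
  then show "v = poly f z / poly g z"
    using assms g' v by (simp add: frac_eq_eq mult.commute)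
qed (use assms in blast)

lemma eval_rf_0: "eval_rf z 0 = 0"
  unfolding Zero_fract_def by (simp add: eval_rf_Fract)

lemma eval_rf_1: "eval_rf z 1 = 1"
  unfolding One_fract_def by (simp add: eval_rf_Fract)

lemma eval_rf_const_rf: "eval_rf z (const_rf c) = c"
  unfolding const_rf_def by (simp add: eval_rf_Fract)

lemma eval_rf_add:
  assumes "regular_on {z} a" "regular_on {z} b"
  shows "eval_rf z (a + b) = eval_rf z a + eval_rf z b"
proof -
  obtain f g f' g' where a: "a = Fract f g" "g \<noteq> 0" "poly g z \<noteq> 0"
    and b: "b = Fract f' g'" "g' \<noteq> 0" "poly g' z \<noteq> 0"
    using assms unfolding regular_on_def by blast
  then have "a + b = Fract (f * g' + f' * g) (g * g')"
    by auto
  then show ?thesis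
    using a b by (simp add: eval_rf_Fract add_frac_eq)
qed

lemma eval_rf_uminus:
  assumes "regular_on {z} a"
  shows "eval_rf z (- a) = - eval_rf z a"
  using assms unfolding regular_on_def by (auto simp: eval_rf_Fract)

lemma eval_rf_diff:
  assumes "regular_on {z} a" "regular_on {z} b"
  shows "eval_rf z (a - b) = eval_rf z a - eval_rf z b"
  using eval_rf_add[OF assms(1) regular_on_uminus[OF assms(2)]] eval_rf_uminus[OF assms(2)] by simp

lemma eval_rf_mult:
  assumes "regular_on {z} a" "regular_on {z} b"
  shows "eval_rf z (a * b) = eval_rf z a * eval_rf z b"
proof -
  obtain f g f' g' where a: "a = Fract f g" "g \<noteq> 0" "poly g z \<noteq> 0"
    and b: "b = Fract f' g'" "g' \<noteq> 0" "poly g' z \<noteq> 0"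
    using assms unfolding regular_on_def by blast
  then show ?thesis
    by (simp add: eval_rf_Fract)
qed

lemma eval_rf_sum:
  "finite S \<Longrightarrow> (\<And>i. i \<in> S \<Longrightarrow> regular_on {z} (f i)) \<Longrightarrow>
    eval_rf z (sum f S) = (\<Sum>i\<in>S. eval_rf z (f i))"
  by (induction S rule: finite_induct) (simp_all add: eval_rf_0 eval_rf_add regular_on_sum)

lemma eq_0_if_eval_rf_vanishes:
  assumes "infinite K" "regular_on K r" "\<And>z. z \<in> K \<Longrightarrow> eval_rf z r = 0"
  shows "r = 0"
proof -
  obtain f g where r: "r = Fract f g" and g: "\<And>z. z \<in> K \<Longrightarrow> poly g z \<noteq> 0"
    using assms(2) unfolding regular_on_def by blast
  have "K \<subseteq> {z. poly f z = 0}"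
    using assms(3) g by (auto simp: r eval_rf_Fract)
  then have "f = 0"
    using assms(1) poly_roots_finite finite_subset by blast
  then show ?thesis
    by (simp add: r eq_fract(3) Zero_fract_def)
qed

lemma ncp_mult_nonzero_split:
  assumes "ncp_mult p q w \<noteq> 0"
  obtains k where "p (take k w) \<noteq> 0" "q (drop k w) \<noteq> 0"
proof (rule ccontr)
  assume "\<not> thesis"
  then have "\<forall>k\<in>{..length w}. p (take k w) * q (drop k w) = 0"
    using that by (metis mult_zero_left mult_zero_right)
  then show False
    using assms unfolding ncp_mult_def by simp
qed

lemma rel_ideal_uminus:
  "p \<in> rel_ideal UNIV n gs \<Longrightarrow> (\<lambda>w. - p w) \<in> rel_ideal UNIV n gs"
proof (induction rule: rel_ideal.induct)
  case zero
  then show ?case using rel_ideal.zero by simp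
next
  case (gen a b i)
  have "(\<lambda>w. - a w) \<in> FreeAlg UNIV n"
    using gen(1) unfolding FreeAlg_def by auto
  then have "ncp_mult (ncp_mult (\<lambda>w. - a w) (gs ! i)) b \<in> rel_ideal UNIV n gs"
    using gen rel_ideal.gen by blast
  moreover have "ncp_mult (\<lambda>w. - g w) f = (\<lambda>w. - ncp_mult g f w)" for g f :: "nat list \<Rightarrow> 'a"
    unfolding ncp_mult_def by (simp add: sum_negf)
  ultimately show ?case
    by simp
next
  case (add p q)
  then have "ncp_add (\<lambda>w. - p w) (\<lambda>w. - q w) \<in> rel_ideal UNIV n gs"
    using rel_ideal.add by blast
  then show ?case
    by (simp add: ncp_add_def)
qed

lemma rel_ideal_ncp_diff:
  "p \<in> rel_ideal UNIV n gs \<Longrightarrow> q \<in> rel_ideal UNIV n gs \<Longrightarrow> ncp_diff p q \<in> rel_ideal UNIV n gs"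
  using rel_ideal.add[OF _ rel_ideal_uminus] by (fastforce simp: ncp_add_def ncp_diff_def)

locale coeff_subring =
  fixes F :: "'r::comm_ring_1 set"
  assumes zero_mem: "0 \<in> F"
    and add_mem: "\<And>a b. a \<in> F \<Longrightarrow> b \<in> F \<Longrightarrow> a + b \<in> F"
    and mult_mem: "\<And>a b. a \<in> F \<Longrightarrow> b \<in> F \<Longrightarrow> a * b \<in> F"
begin

lemma sum_mem: "finite S \<Longrightarrow> (\<And>i. i \<in> S \<Longrightarrow> f i \<in> F) \<Longrightarrow> sum f S \<in> F"
  by (induction S rule: finite_induct) (auto simp: zero_mem add_mem)

lemma FreeAlg_ncp_add:
  assumes "p \<in> FreeAlg F n" "q \<in> FreeAlg F n"
  shows "ncp_add p q \<in> FreeAlg F n"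
proof -
  have "{w. ncp_add p q w \<noteq> 0} \<subseteq> {w. p w \<noteq> 0} \<union> {w. q w \<noteq> 0}"
    unfolding ncp_add_def by auto
  moreover have "set w \<subseteq> {..<n}" if "ncp_add p q w \<noteq> 0" for w
  proof -
    have "p w \<noteq> 0 \<or> q w \<noteq> 0"
      using that unfolding ncp_add_def by auto
    then show ?thesis
      using assms unfolding FreeAlg_def by auto
  qed
  ultimately show ?thesis
    using assms unfolding FreeAlg_def
    by (auto intro: finite_subset add_mem simp: ncp_add_def)
qed

lemma FreeAlg_ncp_mult:
  assumes p: "p \<in> FreeAlg F n" and q: "q \<in> FreeAlg F n"
  shows "ncp_mult p q \<in> FreeAlg F n"
proof -
  have "{w. ncp_mult p q w \<noteq> 0} \<subseteq> (\<lambda>(u, v). u @ v) ` ({w. p w \<noteq> 0} \<times> {w. q w \<noteq> 0})"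
  proof
    fix w assume "w \<in> {w. ncp_mult p q w \<noteq> 0}"
    then have "ncp_mult p q w \<noteq> 0" by simp
    then obtain k where "p (take k w) \<noteq> 0" "q (drop k w) \<noteq> 0"
      by (rule ncp_mult_nonzero_split)
    then show "w \<in> (\<lambda>(u, v). u @ v) ` ({w. p w \<noteq> 0} \<times> {w. q w \<noteq> 0})"
      by (intro image_eqI[of _ _ "(take k w, drop k w)"]) auto
  qed
  then have "finite {w. ncp_mult p q w \<noteq> 0}"
    using p q unfolding FreeAlg_def by (auto intro: finite_subset)
  moreover have "ncp_mult p q w \<in> F" for w
    using p q unfolding ncp_mult_def FreeAlg_def by (auto intro!: sum_mem mult_mem)
  moreover have "set w \<subseteq> {..<n}" if "ncp_mult p q w \<noteq> 0" for w
  proof -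
    obtain k where "p (take k w) \<noteq> 0" "q (drop k w) \<noteq> 0"
      using \<open>ncp_mult p q w \<noteq> 0\<close> by (rule ncp_mult_nonzero_split)
    then have "set (take k w) \<subseteq> {..<n}" "set (drop k w) \<subseteq> {..<n}"
      using p q unfolding FreeAlg_def by auto
    then show ?thesis
      by (metis append_take_drop_id set_append Un_subset_iff)
  qed
  ultimately show ?thesis
    unfolding FreeAlg_def by auto
qed

lemma rel_ideal_subset_FreeAlg:
  assumes "set fs \<subseteq> FreeAlg F n"
  shows "rel_ideal F n fs \<subseteq> FreeAlg F n"
proof
  fix p assume "p \<in> rel_ideal F n fs"
  then show "p \<in> FreeAlg F n"
  proof (induction rule: rel_ideal.induct)
    case zero
    then show ?case by (simp add: FreeAlg_def zero_mem)
  next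
    case (gen a b i)
    then show ?case using assms nth_mem by (blast intro: FreeAlg_ncp_mult)
  next
    case (add p q)
    then show ?case by (intro FreeAlg_ncp_add)
  qed
qed

end

lemma regular_on_ncp_mult:
  "(\<And>w. regular_on A (p w)) \<Longrightarrow> (\<And>w. regular_on A (q w)) \<Longrightarrow> regular_on A (ncp_mult p q w)"
  unfolding ncp_mult_def by (auto intro!: regular_on_sum regular_on_mult)

lemma spec_ncp_mult:
  assumes "\<And>w. regular_on {z} (p w)" "\<And>w. regular_on {z} (q w)"
  shows "spec z (ncp_mult p q) = ncp_mult (spec z p) (spec z q)"
  using assms unfolding spec_def ncp_mult_def
  by (intro ext) (simp add: eval_rf_sum eval_rf_mult regular_on_mult)

lemma spec_ncp_add:
  assumes "\<And>w. regular_on {z} (p w)" "\<And>w. regular_on {z} (q w)"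
  shows "spec z (ncp_add p q) = ncp_add (spec z p) (spec z q)"
  using assms unfolding spec_def ncp_add_def by (simp add: eval_rf_add)

lemma spec_ncp_diff:
  assumes "\<And>w. regular_on {z} (p w)" "\<And>w. regular_on {z} (q w)"
  shows "spec z (ncp_diff p q) = ncp_diff (spec z p) (spec z q)"
  using assms unfolding spec_def ncp_diff_def by (simp add: eval_rf_diff)

lemma spec_ncp_smult:
  assumes "regular_on {z} c" "\<And>w. regular_on {z} (p w)"
  shows "spec z (ncp_smult c p) = ncp_smult (eval_rf z c) (spec z p)"
  using assms unfolding spec_def ncp_smult_def by (simp add: eval_rf_mult)

lemma spec_ncp_const: "spec z (ncp_const c) = ncp_const (eval_rf z c)"
  unfolding spec_def ncp_const_def by (rule ext) (simp add: eval_rf_0)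

lemma spec_ncp_sum:
  assumes "finite S" "\<And>i w. i \<in> S \<Longrightarrow> regular_on {z} (f i w)"
  shows "spec z (ncp_sum S f) = ncp_sum S (\<lambda>i. spec z (f i))"
  using assms unfolding spec_def ncp_sum_def by (simp add: eval_rf_sum)

lemma spec_FreeAlg:
  assumes "p \<in> FreeAlg R n"
  shows "spec z p \<in> FreeAlg UNIV n"
proof -
  have "{w. spec z p w \<noteq> 0} \<subseteq> {w. p w \<noteq> 0}"
    by (auto simp: spec_def eval_rf_0)
  then show ?thesis
    using assms unfolding FreeAlg_def by (auto intro: finite_subset)
qed

lemma spec_rel_ideal:
  assumes F: "coeff_subring F" and reg: "\<And>r. r \<in> F \<Longrightarrow> regular_on {z} r"
    and fs: "set fs \<subseteq> FreeAlg F n" and p: "p \<in> rel_ideal F n fs"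
  shows "spec z p \<in> rel_ideal UNIV n (map (spec z) fs)"
  using p
proof (induction rule: rel_ideal.induct)
  case zero
  have "spec z (\<lambda>w. 0) = (\<lambda>w. 0)"
    by (simp add: spec_def eval_rf_0)
  then show ?case
    by (metis rel_ideal.zero)
next
  case (gen a b i)
  have coeff_reg: "regular_on {z} (q w)" if "q \<in> FreeAlg F n" for q w
    using that reg unfolding FreeAlg_def by blast
  have fi: "fs ! i \<in> FreeAlg F n"
    using gen(3) fs nth_mem by blast
  have "spec z (ncp_mult (ncp_mult a (fs ! i)) b) =
      ncp_mult (ncp_mult (spec z a) (spec z (fs ! i))) (spec z b)"
    using gen(1,2) fi by (simp add: coeff_reg spec_ncp_mult regular_on_ncp_mult)
  moreover have "spec z (fs ! i) = map (spec z) fs ! i" "i < length (map (spec z) fs)"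
    using gen(3) by auto
  ultimately show ?case
    using gen(1,2) spec_FreeAlg rel_ideal.gen by metis
next
  case (add p q)
  have "p \<in> FreeAlg F n" "q \<in> FreeAlg F n"
    using add(1,2) coeff_subring.rel_ideal_subset_FreeAlg[OF F fs] by blast+
  then have "spec z (ncp_add p q) = ncp_add (spec z p) (spec z q)"
    using reg unfolding FreeAlg_def by (intro spec_ncp_add) blast+
  then show ?case
    using add(3,4) rel_ideal.add by metis
qed

lemma rel_ideal_if_specializations_in_rel_ideal:
  fixes \<xi> :: "'i \<Rightarrow> nat list \<Rightarrow> complex poly fract" and c :: "'i \<Rightarrow> complex poly fract"
  assumes F: "coeff_subring F" and K: "infinite K" and reg: "\<And>r. r \<in> F \<Longrightarrow> regular_on K r"
    and fs: "set fs \<subseteq> FreeAlg F n"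
    and S: "finite S" and xi: "\<And>i. i \<in> S \<Longrightarrow> \<xi> i \<in> FreeAlg F n" and c: "\<And>i. i \<in> S \<Longrightarrow> c i \<in> F"
    and indep: "\<And>z (d :: 'i \<Rightarrow> complex). z \<in> K \<Longrightarrow>
      ncp_sum S (\<lambda>i. ncp_smult (d i) (spec z (\<xi> i))) \<in> rel_ideal UNIV n (map (spec z) fs) \<Longrightarrow>
      \<forall>i\<in>S. d i = 0"
    and p: "p \<in> FreeAlg F n"
    and expansion: "ncp_diff p (ncp_sum S (\<lambda>i. ncp_smult (c i) (\<xi> i))) \<in> rel_ideal F n fs"
    and spec_p: "\<And>z. z \<in> K \<Longrightarrow> spec z p \<in> rel_ideal UNIV n (map (spec z) fs)"
  shows "p \<in> rel_ideal F n fs"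
proof -
  define q where "q = ncp_sum S (\<lambda>i. ncp_smult (c i) (\<xi> i))"
  have eval_c: "eval_rf z (c i) = 0" if z: "z \<in> K" and i: "i \<in> S" for z i
  proof -
    have regz: "regular_on {z} r" if "r \<in> F" for r
      using regular_on_subset[OF reg[OF that]] z by blast
    have coeff_reg: "regular_on {z} (u w)" if "u \<in> FreeAlg F n" for u w
      using that regz unfolding FreeAlg_def by blast
    have term_reg: "regular_on {z} (ncp_smult (c i) (\<xi> i) w)" if "i \<in> S" for i w
      unfolding ncp_smult_def
      using regz[OF c[OF that]] coeff_reg[OF xi[OF that]] by (rule regular_on_mult)
    then have q_reg: "regular_on {z} (q w)" for w
      unfolding q_def ncp_sum_def using S by (simp add: regular_on_sum)
    have term_spec: "spec z (ncp_smult (c i) (\<xi> i)) = ncp_smult (eval_rf z (c i)) (spec z (\<xi> i))"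
      if "i \<in> S" for i
      using regz[OF c[OF that]] coeff_reg[OF xi[OF that]] by (rule spec_ncp_smult)
    have "spec z q = ncp_sum S (\<lambda>i. spec z (ncp_smult (c i) (\<xi> i)))"
      unfolding q_def using S term_reg by (rule spec_ncp_sum)
    also have "\<dots> = ncp_sum S (\<lambda>i. ncp_smult (eval_rf z (c i)) (spec z (\<xi> i)))"
      unfolding ncp_sum_def by (intro ext sum.cong) (simp_all add: term_spec)
    finally have spec_q: "spec z q = ncp_sum S (\<lambda>i. ncp_smult (eval_rf z (c i)) (spec z (\<xi> i)))" .
    have "spec z q = ncp_diff (spec z p) (spec z (ncp_diff p q))"
      using p q_reg by (simp add: spec_ncp_diff coeff_reg) (simp add: ncp_diff_def)
    moreover have "spec z (ncp_diff p q) \<in> rel_ideal UNIV n (map (spec z) fs)"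
      using spec_rel_ideal[OF F regz fs] expansion q_def by blast
    ultimately have "spec z q \<in> rel_ideal UNIV n (map (spec z) fs)"
      using spec_p[OF z] rel_ideal_ncp_diff by metis
    then show ?thesis
      using indep[OF z, of "\<lambda>i. eval_rf z (c i)"] spec_q i by simp
  qed
  have "c i = 0" if "i \<in> S" for i
    using eq_0_if_eval_rf_vanishes[OF K reg[OF c[OF that]]] eval_c that by blast
  then have "q = (\<lambda>w. 0)"
    unfolding q_def ncp_sum_def ncp_smult_def by simp
  then show ?thesis
    using expansion unfolding q_def[symmetric] ncp_diff_def by simp
qed

theorem lemma1p2:
  fixes K :: "complex set"
    and F :: "complex poly fract set"
    and n :: nat
    and fs :: "(nat list \<Rightarrow> complex poly fract) list"
    and Idx :: "'i set"
    and \<xi> :: "'i \<Rightarrow> nat list \<Rightarrow> complex poly fract"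
  assumes K_inf: "infinite K"
    and K_sub: "K \<subseteq> - {0, 1}"
    (* F is a subring of C(t) *)
    and F_0: "0 \<in> F" and F_1: "1 \<in> F"
    and F_add: "\<And>a b. a \<in> F \<Longrightarrow> b \<in> F \<Longrightarrow> a + b \<in> F"
    and F_uminus: "\<And>a. a \<in> F \<Longrightarrow> - a \<in> F"
    and F_mult: "\<And>a b. a \<in> F \<Longrightarrow> b \<in> F \<Longrightarrow> a * b \<in> F"
    (* C[t,t^-1] \<subseteq> F *)
    and F_laurent: "\<And>p k. Fract p ([:0, 1:] ^ k) \<in> F"
    (* F consists of fractions regular at 1 and at every point of K *)
    and F_reg: "\<And>r. r \<in> F \<Longrightarrow> \<exists>f g. r = Fract f g \<and> poly g 1 \<noteq> 0 \<and> (\<forall>z\<in>K. poly g z \<noteq> 0)"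
    (* relations f_1..f_m, F-linear combinations of monomials in x_1..x_n *)
    and fs_in: "\<And>f. f \<in> set fs \<Longrightarrow> f \<in> FreeAlg F n"
    (* t - 1 is nonzero in A *)
    and tm1_nonzero: "ncp_const (Fract [:-1, 1:] 1) \<notin> rel_ideal F n fs"
    (* t - 1 is not a unit in A *)
    and tm1_nonunit: "\<not> (\<exists>q\<in>FreeAlg F n.
          ncp_diff (ncp_mult (ncp_const (Fract [:-1, 1:] 1)) q) (ncp_const 1) \<in> rel_ideal F n fs \<and>
          ncp_diff (ncp_mult q (ncp_const (Fract [:-1, 1:] 1))) (ncp_const 1) \<in> rel_ideal F n fs)"
    (* t - 1 is not a zero divisor in A *)
    and tm1_nzd_l: "\<And>q. q \<in> FreeAlg F n \<Longrightarrow>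
          ncp_mult (ncp_const (Fract [:-1, 1:] 1)) q \<in> rel_ideal F n fs \<Longrightarrow> q \<in> rel_ideal F n fs"
    and tm1_nzd_r: "\<And>q. q \<in> FreeAlg F n \<Longrightarrow>
          ncp_mult q (ncp_const (Fract [:-1, 1:] 1)) \<in> rel_ideal F n fs \<Longrightarrow> q \<in> rel_ideal F n fs"
    (* A_1 = A/(t-1)A is commutative *)
    and A1_comm: "\<And>p q. p \<in> FreeAlg F n \<Longrightarrow> q \<in> FreeAlg F n \<Longrightarrow>
          ncp_diff (ncp_mult p q) (ncp_mult q p) \<in> J1 F n fs"
    (* {xi_i} is an F-basis of A *)
    and xi_in: "\<And>i. i \<in> Idx \<Longrightarrow> \<xi> i \<in> FreeAlg F n"
    and xi_indep: "\<And>S c. finite S \<Longrightarrow> S \<subseteq> Idx \<Longrightarrow> (\<forall>i\<in>S. c i \<in> F) \<Longrightarrow>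
          ncp_sum S (\<lambda>i. ncp_smult (c i) (\<xi> i)) \<in> rel_ideal F n fs \<Longrightarrow> (\<forall>i\<in>S. c i = 0)"
    and xi_span: "\<And>p. p \<in> FreeAlg F n \<Longrightarrow> \<exists>S c. finite S \<and> S \<subseteq> Idx \<and> (\<forall>i\<in>S. c i \<in> F) \<and>
          ncp_diff p (ncp_sum S (\<lambda>i. ncp_smult (c i) (\<xi> i))) \<in> rel_ideal F n fs"
    (* {gamma_1(xi_i)} is a C-basis of A_1 *)
    and xi1_indep: "\<And>S (c :: 'i \<Rightarrow> complex). finite S \<Longrightarrow> S \<subseteq> Idx \<Longrightarrow>
          ncp_sum S (\<lambda>i. ncp_smult (const_rf (c i)) (\<xi> i)) \<in> J1 F n fs \<Longrightarrow> (\<forall>i\<in>S. c i = 0)"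
    and xi1_span: "\<And>p. p \<in> FreeAlg F n \<Longrightarrow> \<exists>S (c :: 'i \<Rightarrow> complex). finite S \<and> S \<subseteq> Idx \<and>
          ncp_diff p (ncp_sum S (\<lambda>i. ncp_smult (const_rf (c i)) (\<xi> i))) \<in> J1 F n fs"
    (* {gamma_lambda(xi_i)} is a C-basis of A_lambda for every lambda in K *)
    and xil_indep: "\<And>z S (c :: 'i \<Rightarrow> complex). z \<in> K \<Longrightarrow> finite S \<Longrightarrow> S \<subseteq> Idx \<Longrightarrow>
          ncp_sum S (\<lambda>i. ncp_smult (c i) (spec z (\<xi> i))) \<in> rel_ideal UNIV n (map (spec z) fs) \<Longrightarrow>
          (\<forall>i\<in>S. c i = 0)"
    and xil_span: "\<And>z p. z \<in> K \<Longrightarrow> p \<in> FreeAlg UNIV n \<Longrightarrow> \<exists>S (c :: 'i \<Rightarrow> complex). finite S \<and> S \<subseteq> Idx \<and>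
          ncp_diff p (ncp_sum S (\<lambda>i. ncp_smult (c i) (spec z (\<xi> i)))) \<in> rel_ideal UNIV n (map (spec z) fs)"
  shows
    "(\<forall>z\<in>K. \<forall>p\<in>rel_ideal F n fs. spec z p \<in> rel_ideal UNIV n (map (spec z) fs))
     \<and> (\<forall>z\<in>K. \<forall>p\<in>FreeAlg F n. \<forall>q\<in>FreeAlg F n.
          spec z (ncp_mult p q) = ncp_mult (spec z p) (spec z q) \<and>
          spec z (ncp_add p q) = ncp_add (spec z p) (spec z q))
     \<and> (\<forall>z\<in>K. \<forall>c p. p \<in> FreeAlg F n \<longrightarrow>
          spec z (ncp_smult (const_rf c) p) = ncp_smult c (spec z p))
     \<and> (\<forall>z\<in>K. spec z (ncp_const 1) = ncp_const 1)
     \<and> (\<forall>p\<in>FreeAlg F n. (\<forall>z\<in>K. spec z p \<in> rel_ideal UNIV n (map (spec z) fs))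
          \<longrightarrow> p \<in> rel_ideal F n fs)"
proof -
  have F: "coeff_subring F"
    using F_0 F_add F_mult by unfold_locales
  have fs: "set fs \<subseteq> FreeAlg F n"
    using fs_in by blast
  have regK: "regular_on K r" if "r \<in> F" for r
    using F_reg[OF that] by (auto intro!: regular_on_Fract)
  have reg: "regular_on {z} r" if "z \<in> K" "r \<in> F" for z r
    using regular_on_subset[OF regK] that by blast
  have coeff_reg: "regular_on {z} (p w)" if "z \<in> K" "p \<in> FreeAlg F n" for z p w
    using that reg unfolding FreeAlg_def by blast
  have injective: "p \<in> rel_ideal F n fs"
    if p: "p \<in> FreeAlg F n" and spec_p: "\<forall>z\<in>K. spec z p \<in> rel_ideal UNIV n (map (spec z) fs)" for p
  proof -
    obtain S c where "finite S" "S \<subseteq> Idx" "\<forall>i\<in>S. c i \<in> F"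
      and "ncp_diff p (ncp_sum S (\<lambda>i. ncp_smult (c i) (\<xi> i))) \<in> rel_ideal F n fs"
      using xi_span[OF p] by blast
    then show ?thesis
      using rel_ideal_if_specializations_in_rel_ideal[OF F K_inf regK fs, of S \<xi> c p] xi_in xil_indep p spec_p
      by blast
  qed
  show ?thesis
    using spec_rel_ideal[OF F reg fs] spec_ncp_mult spec_ncp_add coeff_reg
      spec_ncp_smult[OF regular_on_const_rf] eval_rf_const_rf spec_ncp_const eval_rf_1 injective
    by auto
qed

end
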